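(* Let $N\ge1$, $H=(H_1,\dots,H_N)\in]0,1[^N$, $a\in\mathbb{R}^N\setminus\{(0,\dots,0)\}$, let $S^H$ be the mixed sub-fractional Brownian motion with parameters $N,a,H$, and let $H_{i_0}=\min\{H_i; i\in\{1,\dots,N\},\ a_i\neq0\}$. For all $T>0$ and $\gamma<H_{i_0}$, $S^H$ has a modification whose sample paths are Hölder-continuous of order $\gamma$ on $[0,T]$.
   Context: Let $(\Omega,\mathcal F,\mathbb P)$ be a probability space. For $K\in]0,1[$, a fractional Brownian motion on $\mathbb{R}$ with Hurst index $K$ is a continuous centered Gaussian process $\{B^K(t),t\in\mathbb{R}\}$ with $\mathrm{Cov}(B^K(t),B^K(s))=\frac12(|t|^{2K}+|s|^{2K}-|t-s|^{2K})$. The sub-fractional Brownian motion (sfBm) of index $K$ is $\xi^K_t=(B^K_t+B^K_{-t})/\sqrt2$, $t\ge0$; it is a continuous centered Gaussian process with $\mathrm{Cov}(\xi^K_t,\xi^K_s)=s^{2K}+t^{2K}-\frac12\big((s+t)^{2K}+|t-s|^{2K}\big)$. For $N\ge1$, $H\in]0,1[^N$, $a\in\mathbb{R}^N\setminus\{0\}$, the mixed sub-fractional Brownian motion (msfBm) is $S^H_t=\sum_{i=1}^N a_i\xi^{H_i}(t)$, $t\ge0$, where $\xi^{H_1},\dots,\xi^{H_N}$ are independent sfBms with indices $H_1,\dots,H_N$. *)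

theory Defs
  imports "HOL-Probability.Probability"
begin

definition real_gaussian :: "'a measure \<Rightarrow> ('a \<Rightarrow> real) \<Rightarrow> bool" where
  "real_gaussian M X \<longleftrightarrow> X \<in> borel_measurable M \<and>
     ((\<exists>c. AE \<omega> in M. X \<omega> = c) \<or>
      (\<exists>\<mu> \<sigma>. \<sigma> > 0 \<and> distributed M lborel X (normal_density \<mu> \<sigma>)))"

definition gaussian_process :: "'a measure \<Rightarrow> real set \<Rightarrow> (real \<Rightarrow> 'a \<Rightarrow> real) \<Rightarrow> bool" where
  "gaussian_process M I X \<longleftrightarrow>
     (\<forall>F c. finite F \<longrightarrow> F \<subseteq> I \<longrightarrow> real_gaussian M (\<lambda>\<omega>. \<Sum>t\<in>F. c t * X t \<omega>))"

definition is_fBm :: "'a measure \<Rightarrow> real \<Rightarrow> (real \<Rightarrow> 'a \<Rightarrow> real) \<Rightarrow> bool" where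
  "is_fBm M K B \<longleftrightarrow>
     gaussian_process M UNIV B \<and>
     (\<forall>\<omega>\<in>space M. continuous_on UNIV (\<lambda>t. B t \<omega>)) \<and>
     (\<forall>t. prob_space.expectation M (B t) = 0) \<and>
     (\<forall>s t. prob_space.expectation M (\<lambda>\<omega>. B t \<omega> * B s \<omega>) =
        (\<bar>t\<bar> powr (2*K) + \<bar>s\<bar> powr (2*K) - \<bar>t - s\<bar> powr (2*K)) / 2)"

definition is_sfBm :: "'a measure \<Rightarrow> real \<Rightarrow> (real \<Rightarrow> 'a \<Rightarrow> real) \<Rightarrow> bool" where
  "is_sfBm M K \<xi> \<longleftrightarrow>
     (\<exists>B. is_fBm M K B \<and> (\<forall>t\<ge>0. \<forall>\<omega>\<in>space M. \<xi> t \<omega> = (B t \<omega> + B (-t) \<omega>) / sqrt 2))"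

definition hoelder_on :: "real \<Rightarrow> real set \<Rightarrow> (real \<Rightarrow> real) \<Rightarrow> bool" where
  "hoelder_on g A f \<longleftrightarrow> (\<exists>C. \<forall>s\<in>A. \<forall>t\<in>A. \<bar>f t - f s\<bar> \<le> C * \<bar>t - s\<bar> powr g)"

end

theory Submission
  imports Defs
begin

text \<open>Each sfBm is \<open>(B t + B (-t)) / sqrt 2\<close> for an fBm \<open>B\<close> with continuous paths, so it suffices
  to show that fBm paths of index \<open>K\<close> are a.s. Hoelder of every order \<open>g < K\<close> on compact intervals.
  An fBm increment over a dyadic interval of length \<open>L / 2^n\<close> is centred Gaussian with variance
  \<open>(L / 2^n) powr (2*K)\<close>; Markov's inequality for its \<open>2k\<close>-th moment with \<open>k (K - g) > 1\<close>, a union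
  bound over the \<open>2^n\<close> intervals of level \<open>n\<close> and Borel--Cantelli show that a.s. all dyadic
  increments of level \<open>n\<close> are eventually at most \<open>2 powr (-n*g)\<close>. Chaining along dyadic
  approximations turns this into a Hoelder bound for a continuous path. Hoelder continuity is
  preserved by finite linear combinations, and setting the process to \<open>0\<close> on the exceptional
  null set yields the modification.\<close>

section \<open>Hoelder continuity\<close>

lemma hoelder_on_const: "hoelder_on g A (\<lambda>t. c)"
  unfolding hoelder_on_def by (intro exI[of _ 0]) simp

lemma hoelder_on_add:
  assumes "hoelder_on g A f" "hoelder_on g A h"
  shows "hoelder_on g A (\<lambda>t. f t + h t)"
proof -
  obtain C1 where C1: "\<forall>s\<in>A. \<forall>t\<in>A. \<bar>f t - f s\<bar> \<le> C1 * \<bar>t - s\<bar> powr g"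
    using assms(1) unfolding hoelder_on_def by blast
  obtain C2 where C2: "\<forall>s\<in>A. \<forall>t\<in>A. \<bar>h t - h s\<bar> \<le> C2 * \<bar>t - s\<bar> powr g"
    using assms(2) unfolding hoelder_on_def by blast
  have "\<bar>(f t + h t) - (f s + h s)\<bar> \<le> (C1 + C2) * \<bar>t - s\<bar> powr g" if "s \<in> A" "t \<in> A" for s t
    using C1 C2 that by (smt (verit, best) distrib_right)
  then show ?thesis unfolding hoelder_on_def by blast
qed

lemma hoelder_on_cmult:
  assumes "hoelder_on g A f"
  shows "hoelder_on g A (\<lambda>t. c * f t)"
proof -
  obtain C where C: "\<forall>s\<in>A. \<forall>t\<in>A. \<bar>f t - f s\<bar> \<le> C * \<bar>t - s\<bar> powr g"
    using assms unfolding hoelder_on_def by blast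
  have "\<bar>c * f t - c * f s\<bar> \<le> (\<bar>c\<bar> * C) * \<bar>t - s\<bar> powr g" if "s \<in> A" "t \<in> A" for s t
  proof -
    have "\<bar>c * f t - c * f s\<bar> = \<bar>c\<bar> * \<bar>f t - f s\<bar>" by (simp add: abs_mult flip: right_diff_distrib)
    also have "\<dots> \<le> \<bar>c\<bar> * (C * \<bar>t - s\<bar> powr g)" using C that by (intro mult_left_mono) auto
    finally show ?thesis by (simp add: mult.assoc)
  qed
  then show ?thesis unfolding hoelder_on_def by blast
qed

lemma hoelder_on_sum:
  assumes "finite I" "\<And>i. i \<in> I \<Longrightarrow> hoelder_on g A (F i)"
  shows "hoelder_on g A (\<lambda>t. \<Sum>i\<in>I. F i t)"
  using assms by (induction I rule: finite_induct) (simp_all add: hoelder_on_const hoelder_on_add)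

lemma hoelder_on_cong: "(\<And>t. t \<in> A \<Longrightarrow> f t = h t) \<Longrightarrow> hoelder_on g A f = hoelder_on g A h"
  by (simp add: hoelder_on_def)

lemma hoelder_on_subset: "hoelder_on g A f \<Longrightarrow> B \<subseteq> A \<Longrightarrow> hoelder_on g B f"
  unfolding hoelder_on_def by blast

lemma hoelder_onI_less:
  fixes f :: "real \<Rightarrow> real"
  assumes "\<And>s t. s \<in> A \<Longrightarrow> t \<in> A \<Longrightarrow> s < t \<Longrightarrow> \<bar>f t - f s\<bar> \<le> C * (t - s) powr g"
  shows "hoelder_on g A f"
proof -
  have "\<bar>f t - f s\<bar> \<le> C * \<bar>t - s\<bar> powr g" if "s \<in> A" "t \<in> A" for s t
    using assms[OF that] assms[OF that(2,1)] by (cases s t rule: linorder_cases) (auto simp: abs_minus_commute)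
  then show ?thesis unfolding hoelder_on_def by blast
qed

lemma hoelder_on_reflect:
  assumes "hoelder_on g {-b..-a} f"
  shows "hoelder_on g {a..b} (\<lambda>t. f (-t))"
proof -
  obtain C where C: "\<forall>s\<in>{-b..-a}. \<forall>t\<in>{-b..-a}. \<bar>f t - f s\<bar> \<le> C * \<bar>t - s\<bar> powr g"
    using assms unfolding hoelder_on_def by blast
  have "\<bar>f (-t) - f (-s)\<bar> \<le> C * \<bar>t - s\<bar> powr g" if "s \<in> {a..b}" "t \<in> {a..b}" for s t
    using C[rule_format, of "-s" "-t"] that by (simp add: abs_minus_commute)
  then show ?thesis unfolding hoelder_on_def by blast
qed

lemma hoelder_on_le_exponent:
  assumes "hoelder_on g' {a..b} f" "g \<le> g'"
  shows "hoelder_on g {a..b} f"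
proof -
  obtain C where C: "\<forall>s\<in>{a..b}. \<forall>t\<in>{a..b}. \<bar>f t - f s\<bar> \<le> C * \<bar>t - s\<bar> powr g'"
    using assms(1) unfolding hoelder_on_def by auto
  define D where "D = \<bar>C\<bar> * max 1 ((b - a) powr (g' - g))"
  have "\<bar>f t - f s\<bar> \<le> D * \<bar>t - s\<bar> powr g" if st: "s \<in> {a..b}" "t \<in> {a..b}" for s t
  proof (cases "t = s")
    case False
    have "\<bar>t - s\<bar> powr g' = \<bar>t - s\<bar> powr g * \<bar>t - s\<bar> powr (g' - g)"
      by (simp add: powr_add[symmetric])
    also have "\<dots> \<le> \<bar>t - s\<bar> powr g * max 1 ((b - a) powr (g' - g))"
      using st False assms(2) by (intro mult_left_mono max.coboundedI2 powr_mono2) auto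
    finally have "\<bar>C\<bar> * \<bar>t - s\<bar> powr g' \<le> \<bar>C\<bar> * (\<bar>t - s\<bar> powr g * max 1 ((b - a) powr (g' - g)))"
      by (rule mult_left_mono) simp
    then have "\<bar>C\<bar> * \<bar>t - s\<bar> powr g' \<le> D * \<bar>t - s\<bar> powr g"
      unfolding D_def by (simp add: ac_simps)
    moreover have "\<bar>f t - f s\<bar> \<le> \<bar>C\<bar> * \<bar>t - s\<bar> powr g'"
      using C st by (meson abs_ge_self order_trans mult_right_mono powr_ge_zero)
    ultimately show ?thesis by linarith
  qed simp
  then show ?thesis unfolding hoelder_on_def by blast
qed

lemma hoelder_on_affine_rescale:
  assumes L: "0 < L" and f: "hoelder_on g {0..1} (\<lambda>x. F (u + L * x))"
  shows "hoelder_on g {u..u+L} F"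
proof -
  obtain C where C: "\<forall>x\<in>{0..1}. \<forall>y\<in>{0..1}. \<bar>F (u + L * y) - F (u + L * x)\<bar> \<le> C * \<bar>y - x\<bar> powr g"
    using f unfolding hoelder_on_def by blast
  have "\<bar>F t - F s\<bar> \<le> (C * L powr (-g)) * \<bar>t - s\<bar> powr g" if "s \<in> {u..u+L}" "t \<in> {u..u+L}" for s t
  proof -
    define x where "x = (s - u) / L"
    define y where "y = (t - u) / L"
    have xy: "x \<in> {0..1}" "y \<in> {0..1}" using that L unfolding x_def y_def by (auto simp: field_simps)
    have F: "F (u + L * x) = F s" "F (u + L * y) = F t" unfolding x_def y_def using L by auto
    have "y - x = (t - s) / L" unfolding x_def y_def using L by (simp add: field_simps)
    then have "\<bar>y - x\<bar> powr g = \<bar>t - s\<bar> powr g * L powr (-g)"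
      using L by (simp add: abs_divide powr_divide powr_minus_divide)
    then show ?thesis using C xy F by (metis mult.assoc mult.commute)
  qed
  then show ?thesis unfolding hoelder_on_def by blast
qed

section \<open>Hoelder continuity from dyadic increments\<close>

lemma one_over_power2_powr: "(1 / 2^n) powr g = 2 powr (- real n * g)"
  by (simp add: powr_divide powr_realpow[symmetric] powr_powr powr_minus_divide)

definition dyadic_index :: "nat \<Rightarrow> real \<Rightarrow> nat" where
  "dyadic_index n x = nat \<lfloor>x * 2^n\<rfloor>"

definition dyadic_floor :: "nat \<Rightarrow> real \<Rightarrow> real" where
  "dyadic_floor n x = real (dyadic_index n x) / 2^n"

definition dyadic_increments_le :: "nat \<Rightarrow> real \<Rightarrow> (real \<Rightarrow> real) \<Rightarrow> bool" where
  "dyadic_increments_le n0 g f \<longleftrightarrow> (\<forall>n\<ge>n0. \<forall>j::nat. j < 2^n \<longrightarrow>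
     \<bar>f ((real j + 1) / 2^n) - f (real j / 2^n)\<bar> \<le> 2 powr (- real n * g))"

lemma dyadic_index_bounds:
  assumes "0 \<le> x"
  shows "real (dyadic_index n x) \<le> x * 2^n" "x * 2^n < real (dyadic_index n x) + 1"
  using assms unfolding dyadic_index_def by simp_all

lemma dyadic_index_Suc:
  assumes "0 \<le> x"
  shows "dyadic_index (Suc n) x \<in> {2 * dyadic_index n x, 2 * dyadic_index n x + 1}"
proof -
  have "real (dyadic_index (Suc n) x) < real (2 * dyadic_index n x + 2)"
    "real (2 * dyadic_index n x) < real (dyadic_index (Suc n) x + 1)"
    using dyadic_index_bounds[OF assms, of n] dyadic_index_bounds[OF assms, of "Suc n"] by auto
  then show ?thesis by (simp only: of_nat_less_iff) auto
qed

lemma dyadic_floor_le: "0 \<le> x \<Longrightarrow> dyadic_floor n x \<le> x"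
  using dyadic_index_bounds(1)[of x n] by (simp add: dyadic_floor_def divide_le_eq)

lemma dyadic_floor_gt:
  assumes "0 \<le> x" shows "x - 1 / 2^n < dyadic_floor n x"
proof -
  have "(x * 2^n - 1) / 2^n < real (dyadic_index n x) / 2^n"
    using dyadic_index_bounds(2)[OF assms, of n] by (simp add: divide_strict_right_mono)
  then show ?thesis by (simp add: dyadic_floor_def diff_divide_distrib)
qed

lemma dyadic_floor_tendsto: "0 \<le> x \<Longrightarrow> (\<lambda>n. dyadic_floor n x) \<longlonglongrightarrow> x"
proof (rule tendsto_sandwich[OF _ _ _ tendsto_const])
  assume x: "0 \<le> x"
  show "\<forall>\<^sub>F n in sequentially. x - (1/2) ^ n \<le> dyadic_floor n x"
    using dyadic_floor_gt[OF x] by (auto simp: power_one_over less_imp_le)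
  show "\<forall>\<^sub>F n in sequentially. dyadic_floor n x \<le> x" using dyadic_floor_le[OF x] by auto
  have "(\<lambda>n. x - (1/2::real)^n) \<longlonglongrightarrow> x - 0" by (intro tendsto_intros) simp
  then show "(\<lambda>n. x - (1/2::real)^n) \<longlonglongrightarrow> x" by simp
qed

lemma dyadic_floor_Suc_increment:
  assumes G: "dyadic_increments_le n0 g f" and x: "0 \<le> x" "x \<le> 1" and n: "n0 \<le> Suc n"
  shows "\<bar>f (dyadic_floor (Suc n) x) - f (dyadic_floor n x)\<bar> \<le> 2 powr (- real (Suc n) * g)"
proof -
  define j where "j = 2 * dyadic_index n x"
  have fl: "dyadic_floor n x = real j / 2^Suc n" unfolding j_def dyadic_floor_def by simp
  consider "dyadic_index (Suc n) x = j" | "dyadic_index (Suc n) x = j + 1"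
    using dyadic_index_Suc[OF x(1), of n] unfolding j_def by blast
  then show ?thesis
  proof cases
    case 1
    then have "dyadic_floor (Suc n) x = dyadic_floor n x" unfolding fl by (simp add: dyadic_floor_def)
    then show ?thesis by simp
  next
    case 2
    have "x * 2^Suc n \<le> 2^Suc n" using x(2) by simp
    moreover have "real (j + 1) \<le> x * 2^Suc n"
      using dyadic_index_bounds(1)[OF x(1), of "Suc n"] unfolding 2 .
    ultimately have "real (j + 1) \<le> real (2^Suc n)"
      by (simp only: of_nat_numeral of_nat_power)
    then have "j < 2^Suc n" by (simp only: of_nat_le_iff)
    then have "\<bar>f ((real j + 1) / 2^Suc n) - f (real j / 2^Suc n)\<bar> \<le> 2 powr (- real (Suc n) * g)"
      using G n unfolding dyadic_increments_le_def by blast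
    then show ?thesis using 2 unfolding fl by (simp add: dyadic_floor_def add.commute)
  qed
qed

lemma dyadic_floor_telescope:
  assumes G: "dyadic_increments_le n0 g f" and x: "0 \<le> x" "x \<le> 1" and n: "n0 \<le> n"
  shows "\<bar>f (dyadic_floor (n + m) x) - f (dyadic_floor n x)\<bar>
    \<le> 2 powr (- real n * g) * (\<Sum>i<m. (2 powr (-g))^(i+1))"
proof (induction m)
  case (Suc m)
  have "2 powr (- real (Suc (n + m)) * g) = 2 powr (- real n * g) * (2 powr (-g))^(m+1)"
    by (simp add: powr_power powr_add[symmetric] algebra_simps)
  then have "\<bar>f (dyadic_floor (Suc (n + m)) x) - f (dyadic_floor (n + m) x)\<bar>
      \<le> 2 powr (- real n * g) * (2 powr (-g))^(m+1)"
    using dyadic_floor_Suc_increment[OF G x, of "n + m"] n by simp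
  with Suc.IH show ?case by (simp add: algebra_simps)
qed simp

lemma geometric_partial_sum_le:
  fixes q :: real assumes "0 \<le> q" "q < 1"
  shows "(\<Sum>i<m. q^(i+1)) \<le> q / (1 - q)"
proof -
  have "(\<Sum>i<m. q^(i+1)) = q * ((1 - q^m) / (1 - q))"
    using assms by (simp add: sum_distrib_left[symmetric] sum_gp_strict)
  also have "\<dots> \<le> q * (1 / (1 - q))"
    using assms by (intro mult_left_mono divide_right_mono) auto
  finally show ?thesis by simp
qed

lemma dyadic_floor_approx:
  assumes G: "dyadic_increments_le n0 g f" and x: "0 \<le> x" "x \<le> 1" and n: "n0 \<le> n"
    and g: "0 < g" and cont: "continuous_on {0..1} f"
  shows "\<bar>f x - f (dyadic_floor n x)\<bar> \<le> 2 powr (- real n * g) * (2 powr (-g) / (1 - 2 powr (-g)))"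
proof -
  have q: "0 \<le> 2 powr (-g)" "2 powr (-g) < (1::real)" using g by (auto intro: powr_less_one)
  have "(\<lambda>m. dyadic_floor (m + n) x) \<longlonglongrightarrow> x"
    using LIMSEQ_ignore_initial_segment[OF dyadic_floor_tendsto[OF x(1)]] .
  moreover have "dyadic_floor k x \<in> {0..1}" for k
  proof -
    have "0 \<le> dyadic_floor k x" by (simp add: dyadic_floor_def)
    then show ?thesis using x dyadic_floor_le[OF x(1), of k] by simp
  qed
  ultimately have "(\<lambda>m. f (dyadic_floor (m + n) x)) \<longlonglongrightarrow> f x"
    using x by (intro continuous_on_tendsto_compose[OF cont]) auto
  then have "(\<lambda>m. \<bar>f (dyadic_floor (n + m) x) - f (dyadic_floor n x)\<bar>) \<longlonglongrightarrow> \<bar>f x - f (dyadic_floor n x)\<bar>"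
    by (auto intro!: tendsto_intros simp: add.commute)
  then show ?thesis
  proof (rule LIMSEQ_le_const2, intro exI allI impI)
    fix m
    show "\<bar>f (dyadic_floor (n + m) x) - f (dyadic_floor n x)\<bar>
        \<le> 2 powr (- real n * g) * (2 powr (-g) / (1 - 2 powr (-g)))"
      using dyadic_floor_telescope[OF G x n, of m] geometric_partial_sum_le[OF q, of m]
      by (meson mult_left_mono order_trans powr_ge_zero)
  qed
qed

lemma dyadic_floor_adjacent_increment:
  assumes G: "dyadic_increments_le n0 g f" and st: "0 \<le> s" "s \<le> t" "t \<le> 1"
    and close: "t - s \<le> 1 / 2^n" and n: "n0 \<le> n"
  shows "\<bar>f (dyadic_floor n t) - f (dyadic_floor n s)\<bar> \<le> 2 powr (- real n * g)"
proof -
  define i where "i = dyadic_index n s"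
  define k where "k = dyadic_index n t"
  have t: "0 \<le> t" using st by linarith
  have "t * 2^n \<le> s * 2^n + 1" "s * 2^n \<le> t * 2^n" "t * 2^n \<le> 2^n"
    using close st by (simp_all add: field_simps)
  moreover note dyadic_index_bounds[OF st(1), of n] dyadic_index_bounds[OF t, of n]
  ultimately have "real k < real (i + 2)" "real i < real (k + 1)"
    unfolding i_def k_def by (simp_all only: of_nat_add of_nat_numeral of_nat_1)
  then consider "k = i" | "k = i + 1" by (simp only: of_nat_less_iff) linarith
  then show ?thesis
  proof cases
    case 1
    then show ?thesis unfolding i_def k_def dyadic_floor_def by simp
  next
    case 2
    have "real (i + 1) \<le> t * 2^n" using dyadic_index_bounds(1)[OF t, of n] 2 unfolding k_def by simp
    with \<open>t * 2^n \<le> 2^n\<close> have "real (i + 1) \<le> real (2^n)"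
      by (simp only: of_nat_numeral of_nat_power)
    then have "i < 2^n" by (simp only: of_nat_le_iff)
    then have "\<bar>f ((real i + 1) / 2^n) - f (real i / 2^n)\<bar> \<le> 2 powr (- real n * g)"
      using G n unfolding dyadic_increments_le_def by blast
    then show ?thesis using 2 unfolding i_def k_def dyadic_floor_def by (simp add: add.commute)
  qed
qed

lemma exists_dyadic_scale:
  fixes d :: real assumes "0 < d" "d \<le> 1"
  obtains n where "1 / 2^Suc n < d" "d \<le> 1 / 2^n"
proof -
  obtain m where "(1/2::real)^m < d" using real_arch_pow_inv[OF assms(1), of "1/2"] by auto
  then have "1 / 2^m < d" by (simp add: power_one_over)
  then obtain n where "\<forall>i\<le>n. \<not> 1 / 2^i < d" "1 / 2^Suc n < d"
    using ex_least_nat_less[of "\<lambda>i. 1 / 2^i < d" m] assms(2) by auto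
  then show ?thesis using that by (meson order.refl not_less)
qed

lemma dyadic_increments_local_hoelder:
  assumes G: "dyadic_increments_le n0 g f" and g: "0 < g" and cont: "continuous_on {0..1} f"
    and st: "0 \<le> s" "s < t" "t \<le> 1" and close: "t - s < 1 / 2^n0"
  shows "\<bar>f t - f s\<bar> \<le> (2 * (2 powr (-g) / (1 - 2 powr (-g))) + 1) * 2 powr g * (t - s) powr g"
proof -
  define c where "c = 2 powr (-g) / (1 - 2 powr (-g))"
  have c: "0 \<le> c" unfolding c_def using g powr_less_one[of 2 "-g"] by auto
  obtain n where n: "1 / 2^Suc n < t - s" "t - s \<le> 1 / 2^n"
    using exists_dyadic_scale[of "t - s"] st by auto
  have "1 / 2^Suc n < (1::real) / 2^n0" using n(1) close by linarith
  then have "(2::real)^n0 < 2^Suc n" by (simp add: field_simps)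
  then have "n0 < Suc n" by (rule power_less_imp_less_exp[rotated]) simp
  then have n0: "n0 \<le> n" by simp
  define p where "p = (2::real) powr (- real n * g)"
  have "\<bar>f t - f s\<bar> \<le> \<bar>f t - f (dyadic_floor n t)\<bar> + \<bar>f (dyadic_floor n t) - f (dyadic_floor n s)\<bar>
      + \<bar>f s - f (dyadic_floor n s)\<bar>"
    by linarith
  also have "\<dots> \<le> p * c + p + p * c"
    using dyadic_floor_approx[OF G _ _ n0 g cont, of t] dyadic_floor_approx[OF G _ _ n0 g cont, of s]
      dyadic_floor_adjacent_increment[OF G st(1) _ st(3) n(2) n0] st
    unfolding p_def c_def by (intro add_mono) auto
  also have "\<dots> = (2 * c + 1) * (1 / 2^n) powr g" unfolding p_def one_over_power2_powr by algebra
  also have "(1 / 2^n) powr g \<le> (2 * (t - s)) powr g"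
    using n(1) g by (intro powr_mono2) (auto simp: field_simps)
  also have "(2 * (t - s)) powr g = 2 powr g * (t - s) powr g" using st powr_mult[of 2 "t - s" g] by simp
  finally show ?thesis using c by (simp add: c_def mult.assoc)
qed

lemma dyadic_increments_imp_hoelder_on:
  assumes G: "dyadic_increments_le n0 g f" and g: "0 < g" and cont: "continuous_on {0..1} f"
  shows "hoelder_on g {0..1} f"
proof -
  define c where "c = 2 powr (-g) / (1 - 2 powr (-g))"
  obtain Bd where Bd: "\<And>x. x \<in> {0..1} \<Longrightarrow> \<bar>f x\<bar> \<le> Bd"
    using compact_imp_bounded[OF compact_continuous_image[OF cont]] bounded_iff
    by (metis compact_Icc image_eqI real_norm_def)
  define C where "C = max ((2 * c + 1) * 2 powr g) (2 * Bd * 2 powr (real n0 * g))"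
  show ?thesis
  proof (rule hoelder_onI_less[where C = C])
    fix s t :: real assume st: "s \<in> {0..1}" "t \<in> {0..1}" "s < t"
    show "\<bar>f t - f s\<bar> \<le> C * (t - s) powr g"
    proof (cases "t - s < 1 / 2^n0")
      case True
      then have "\<bar>f t - f s\<bar> \<le> (2 * c + 1) * 2 powr g * (t - s) powr g"
        using dyadic_increments_local_hoelder[OF G g cont] st unfolding c_def by auto
      also have "\<dots> \<le> C * (t - s) powr g" unfolding C_def by (intro mult_right_mono) auto
      finally show ?thesis .
    next
      case False
      have "\<bar>f t - f s\<bar> \<le> 2 * Bd" using Bd[of s] Bd[of t] st by linarith
      also have "\<dots> = 2 * Bd * 2 powr (real n0 * g) * (1 / 2^n0) powr g"
        by (simp add: one_over_power2_powr powr_add[symmetric])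
      also have "\<dots> \<le> 2 * Bd * 2 powr (real n0 * g) * (t - s) powr g"
        using False g Bd[of 0] by (intro mult_left_mono powr_mono2) auto
      also have "\<dots> \<le> C * (t - s) powr g" unfolding C_def by (intro mult_right_mono) auto
      finally show ?thesis .
    qed
  qed
qed

section \<open>Fractional and sub-fractional Brownian motion\<close>

lemma dyadic_union_bound_eq:
  fixes L K g C :: real and k n :: nat
  assumes L: "0 < L"
  shows "2^n * (C * ((L / 2^n) powr (2*K))^k / (2 powr (- real n * g))^(2*k))
     = C * (L powr (2*K))^k * (2 powr (1 - 2 * real k * (K - g)))^n"
proof -
  have a: "(2::real)^n = 2 powr (real n)" by (simp add: powr_realpow)
  have b: "(L / 2^n) powr (2*K) = L powr (2*K) / 2 powr (real n * (2*K))"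
    using L by (simp add: powr_divide a powr_powr)
  have c: "(L powr (2*K) / 2 powr (real n * (2*K)))^k
      = (L powr (2*K))^k / 2 powr (real k * (real n * (2*K)))"
    by (simp add: power_divide powr_power)
  have d: "(2 powr (- real n * g))^(2*k) = (2::real) powr (real (2*k) * (- real n * g))"
    by (simp add: powr_power)
  have e: "(2 powr (1 - 2 * real k * (K - g)))^n = (2::real) powr (real n * (1 - 2 * real k * (K - g)))"
    by (simp add: powr_power)
  have f: "(2::real) powr (real n) / 2 powr (real k * (real n * (2*K)))
      / 2 powr (real (2*k) * (- real n * g)) = 2 powr (real n * (1 - 2 * real k * (K - g)))"
    by (simp add: powr_diff[symmetric] algebra_simps)
  show ?thesis unfolding b c d e unfolding a using f by (simp add: field_simps)
qed

context prob_space
begin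

lemma real_gaussian_centered_cases:
  assumes G: "real_gaussian M X" and E: "expectation X = 0"
  shows "(AE \<omega> in M. X \<omega> = 0) \<or> (\<exists>\<sigma>>0. distributed M lborel X (normal_density 0 \<sigma>))"
proof -
  have meas: "X \<in> borel_measurable M" using G unfolding real_gaussian_def by blast
  from G consider (const) c where "AE \<omega> in M. X \<omega> = c"
    | (normal) \<mu> \<sigma> where "\<sigma> > 0" "distributed M lborel X (normal_density \<mu> \<sigma>)"
    unfolding real_gaussian_def by blast
  then show ?thesis
  proof cases
    case const
    have "expectation X = expectation (\<lambda>_. c)" using const meas by (intro integral_cong_AE) auto
    then have "c = 0" using E by (simp add: prob_space)
    then show ?thesis using const by simp
  next
    case normal
    have "\<mu> = 0" using normal_distributed_expectation[OF normal] E by simp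
    then show ?thesis using normal by auto
  qed
qed

lemma real_gaussian_integrable_power:
  assumes G: "real_gaussian M X" and E: "expectation X = 0"
  shows "integrable M (\<lambda>\<omega>. X \<omega> ^ n)"
proof -
  have meas: "X \<in> borel_measurable M" using G unfolding real_gaussian_def by blast
  from real_gaussian_centered_cases[OF G E] show ?thesis
  proof
    assume "AE \<omega> in M. X \<omega> = 0"
    then have "AE \<omega> in M. X \<omega> ^ n = 0 ^ n" by auto
    then show ?thesis using meas by (subst integrable_cong_AE) auto
  next
    assume "\<exists>\<sigma>>0. distributed M lborel X (normal_density 0 \<sigma>)"
    then obtain \<sigma> where \<sigma>: "\<sigma> > 0" "distributed M lborel X (normal_density 0 \<sigma>)" by blast
    have "integrable lborel (\<lambda>x. normal_density 0 \<sigma> x * x ^ n)"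
      using integrable_normal_moment[OF \<sigma>(1), of 0 n] by simp
    then show ?thesis using distributed_integrable[OF \<sigma>(2), of "\<lambda>x. x ^ n"] by simp
  qed
qed

lemma real_gaussian_even_moment:
  assumes G: "real_gaussian M X" and E: "expectation X = 0"
  shows "expectation (\<lambda>\<omega>. X \<omega> ^ (2*k)) = fact (2*k) / (2^k * fact k) * (expectation (\<lambda>\<omega>. X \<omega> ^ 2))^k"
proof -
  have meas: "X \<in> borel_measurable M" using G unfolding real_gaussian_def by blast
  from real_gaussian_centered_cases[OF G E] show ?thesis
  proof
    assume "AE \<omega> in M. X \<omega> = 0"
    then have "expectation (\<lambda>\<omega>. X \<omega> ^ n) = expectation (\<lambda>_. 0 ^ n)" for n
      using meas by (intro integral_cong_AE) auto
    then have moments: "expectation (\<lambda>\<omega>. X \<omega> ^ n) = 0 ^ n" for n by (simp add: prob_space)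
    show ?thesis unfolding moments by (cases k) simp_all
  next
    assume "\<exists>\<sigma>>0. distributed M lborel X (normal_density 0 \<sigma>)"
    then obtain \<sigma> where \<sigma>: "\<sigma> > 0" "distributed M lborel X (normal_density 0 \<sigma>)" by blast
    have m: "expectation (\<lambda>\<omega>. X \<omega> ^ (2*j)) = fact (2 * j) / ((2 / \<sigma>\<^sup>2)^j * fact j)" for j
      using integral_normal_moment_even[OF \<sigma>(1), of 0 j]
        distributed_integral[OF \<sigma>(2), of "\<lambda>x. x ^ (2*j)"]
      by simp
    have "expectation (\<lambda>\<omega>. X \<omega> ^ 2) = \<sigma>\<^sup>2" using m[of 1] \<sigma>(1) by simp
    then show ?thesis unfolding m using \<sigma>(1) by (simp add: field_simps power_divide power_mult_distrib)
  qed
qed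

lemma real_gaussian_tail_le:
  assumes G: "real_gaussian M X" and E: "expectation X = 0" and \<epsilon>: "0 < \<epsilon>"
  shows "prob {\<omega>\<in>space M. \<epsilon> \<le> \<bar>X \<omega>\<bar>} \<le>
    fact (2*k) / (2^k * fact k) * (expectation (\<lambda>\<omega>. X \<omega> ^ 2))^k / \<epsilon>^(2*k)"
proof -
  have [measurable]: "X \<in> borel_measurable M" using G unfolding real_gaussian_def by blast
  have "{\<omega>\<in>space M. \<epsilon> \<le> \<bar>X \<omega>\<bar>} \<subseteq> {\<omega>\<in>space M. \<epsilon>^(2*k) \<le> X \<omega> ^ (2*k)}"
  proof safe
    fix \<omega> assume "\<epsilon> \<le> \<bar>X \<omega>\<bar>"
    then have "\<epsilon>^(2*k) \<le> \<bar>X \<omega>\<bar>^(2*k)" using \<epsilon> by (intro power_mono) auto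
    then show "\<epsilon>^(2*k) \<le> X \<omega> ^ (2*k)" by (simp add: power_even_abs)
  qed
  then have "prob {\<omega>\<in>space M. \<epsilon> \<le> \<bar>X \<omega>\<bar>} \<le> prob {\<omega>\<in>space M. \<epsilon>^(2*k) \<le> X \<omega> ^ (2*k)}"
    by (intro finite_measure_mono) auto
  also have "\<dots> \<le> expectation (\<lambda>\<omega>. X \<omega> ^ (2*k)) / \<epsilon>^(2*k)"
    by (rule integral_Markov_inequality_measure[OF real_gaussian_integrable_power[OF G E], where A="space M"])
       (use \<epsilon> in \<open>auto simp: zero_le_even_power\<close>)
  finally show ?thesis unfolding real_gaussian_even_moment[OF G E] .
qed

lemma fBm_real_gaussian:
  assumes "is_fBm M K B" shows "real_gaussian M (B t)"
proof -
  have "gaussian_process M UNIV B" using assms unfolding is_fBm_def by simp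
  from this[unfolded gaussian_process_def, rule_format, of "{t}" "\<lambda>_. 1"] show ?thesis by simp
qed

lemma fBm_measurable: "is_fBm M K B \<Longrightarrow> B t \<in> borel_measurable M"
  using fBm_real_gaussian unfolding real_gaussian_def by blast

lemma fBm_expectation: "is_fBm M K B \<Longrightarrow> expectation (B t) = 0"
  unfolding is_fBm_def by simp

lemma fBm_integrable_power: "is_fBm M K B \<Longrightarrow> integrable M (\<lambda>\<omega>. B t \<omega> ^ n)"
  using real_gaussian_integrable_power fBm_real_gaussian fBm_expectation by blast

lemma fBm_increment_real_gaussian:
  assumes fb: "is_fBm M K B"
  shows "real_gaussian M (\<lambda>\<omega>. B q \<omega> - B p \<omega>)"
proof (cases "p = q")
  case True
  then show ?thesis by (simp add: real_gaussian_def)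
next
  case False
  define c where "c u = (if u = q then 1 else - 1::real)" for u
  have "gaussian_process M UNIV B" using fb unfolding is_fBm_def by simp
  from this[unfolded gaussian_process_def, rule_format, of "{p,q}" c]
  have "real_gaussian M (\<lambda>\<omega>. \<Sum>u\<in>{p,q}. c u * B u \<omega>)" by simp
  moreover have "(\<lambda>\<omega>. \<Sum>u\<in>{p,q}. c u * B u \<omega>) = (\<lambda>\<omega>. B q \<omega> - B p \<omega>)"
    using False unfolding c_def by auto
  ultimately show ?thesis by simp
qed

lemma fBm_increment_expectation:
  assumes fb: "is_fBm M K B"
  shows "expectation (\<lambda>\<omega>. B q \<omega> - B p \<omega>) = 0"
  using fBm_integrable_power[OF fb, of _ 1] fBm_expectation[OF fb]
  by (simp add: Bochner_Integration.integral_diff)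

lemma fBm_integrable_mult:
  assumes fb: "is_fBm M K B"
  shows "integrable M (\<lambda>\<omega>. B q \<omega> * B p \<omega>)"
proof -
  have "integrable M (\<lambda>\<omega>. (B q \<omega> ^ 2 + B p \<omega> ^ 2 - (B q \<omega> - B p \<omega>) ^ 2) / 2)"
    using fBm_integrable_power[OF fb] real_gaussian_integrable_power[OF
        fBm_increment_real_gaussian[OF fb] fBm_increment_expectation[OF fb], of q p 2]
    by (intro integrable_divide integrable_diff integrable_add) auto
  moreover have "(\<lambda>\<omega>. (B q \<omega> ^ 2 + B p \<omega> ^ 2 - (B q \<omega> - B p \<omega>) ^ 2) / 2) = (\<lambda>\<omega>. B q \<omega> * B p \<omega>)"
    by (simp add: fun_eq_iff power2_eq_square algebra_simps)
  ultimately show ?thesis by simp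
qed

lemma fBm_increment_variance:
  assumes fb: "is_fBm M K B"
  shows "expectation (\<lambda>\<omega>. (B q \<omega> - B p \<omega>)^2) = \<bar>q - p\<bar> powr (2*K)"
proof -
  have cov: "expectation (\<lambda>\<omega>. B t \<omega> * B s \<omega>) =
      (\<bar>t\<bar> powr (2*K) + \<bar>s\<bar> powr (2*K) - \<bar>t - s\<bar> powr (2*K)) / 2" for t s
    using fb unfolding is_fBm_def by simp
  have "(\<lambda>\<omega>. (B q \<omega> - B p \<omega>)^2)
      = (\<lambda>\<omega>. (B q \<omega> * B q \<omega> + B p \<omega> * B p \<omega>) - 2 * (B q \<omega> * B p \<omega>))"
    by (simp add: fun_eq_iff power2_eq_square algebra_simps)
  then have "expectation (\<lambda>\<omega>. (B q \<omega> - B p \<omega>)^2) =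
      expectation (\<lambda>\<omega>. B q \<omega> * B q \<omega>) + expectation (\<lambda>\<omega>. B p \<omega> * B p \<omega>)
      - 2 * expectation (\<lambda>\<omega>. B q \<omega> * B p \<omega>)"
    using fBm_integrable_mult[OF fb]
    by (simp add: Bochner_Integration.integral_diff Bochner_Integration.integral_add)
  also have "\<dots> = \<bar>q - p\<bar> powr (2*K)" unfolding cov by (simp add: field_simps)
  finally show ?thesis .
qed

lemma fBm_dyadic_level_prob_le:
  assumes fb: "is_fBm M K B" and L: "0 < L"
  shows "prob (\<Union>j<(2::nat)^n. {\<omega>\<in>space M.
      2 powr (- real n * g) < \<bar>B (u + L * ((real j + 1) / 2^n)) \<omega> - B (u + L * (real j / 2^n)) \<omega>\<bar>})
    \<le> fact (2*k) / (2^k * fact k) * (L powr (2*K))^k * (2 powr (1 - 2 * real k * (K - g)))^n"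
proof -
  define C :: real where "C = fact (2*k) / (2^k * fact k)"
  define p where "p j = u + L * (real j / 2^n)" for j :: nat
  define p' where "p' j = u + L * ((real j + 1) / 2^n)" for j :: nat
  have [measurable]: "B t \<in> borel_measurable M" for t by (rule fBm_measurable[OF fb])
  have level: "prob {\<omega>\<in>space M. 2 powr (- real n * g) < \<bar>B (p' j) \<omega> - B (p j) \<omega>\<bar>}
      \<le> C * ((L / 2^n) powr (2*K))^k / (2 powr (- real n * g))^(2*k)" for j
  proof -
    have "prob {\<omega>\<in>space M. 2 powr (- real n * g) < \<bar>B (p' j) \<omega> - B (p j) \<omega>\<bar>}
        \<le> prob {\<omega>\<in>space M. 2 powr (- real n * g) \<le> \<bar>B (p' j) \<omega> - B (p j) \<omega>\<bar>}"
      by (intro finite_measure_mono) auto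
    also have "\<dots> \<le> C * (expectation (\<lambda>\<omega>. (B (p' j) \<omega> - B (p j) \<omega>)^2))^k / (2 powr (- real n * g))^(2*k)"
      unfolding C_def
      by (rule real_gaussian_tail_le[OF fBm_increment_real_gaussian[OF fb] fBm_increment_expectation[OF fb]])
         simp
    also have "expectation (\<lambda>\<omega>. (B (p' j) \<omega> - B (p j) \<omega>)^2) = (L / 2^n) powr (2*K)"
      using fBm_increment_variance[OF fb] L unfolding p_def p'_def by (simp add: field_simps)
    finally show ?thesis .
  qed
  have "prob (\<Union>j<(2::nat)^n. {\<omega>\<in>space M. 2 powr (- real n * g) < \<bar>B (p' j) \<omega> - B (p j) \<omega>\<bar>})
      \<le> (\<Sum>j<(2::nat)^n. prob {\<omega>\<in>space M. 2 powr (- real n * g) < \<bar>B (p' j) \<omega> - B (p j) \<omega>\<bar>})"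
    by (intro finite_measure_subadditive_finite) auto
  also have "\<dots> \<le> (\<Sum>j<(2::nat)^n. C * ((L / 2^n) powr (2*K))^k / (2 powr (- real n * g))^(2*k))"
    by (intro sum_mono level)
  also have "\<dots> = 2^n * (C * ((L / 2^n) powr (2*K))^k / (2 powr (- real n * g))^(2*k))" by simp
  also have "\<dots> = C * (L powr (2*K))^k * (2 powr (1 - 2 * real k * (K - g)))^n"
    by (rule dyadic_union_bound_eq[OF L])
  finally show ?thesis unfolding C_def p_def p'_def .
qed

lemma fBm_eventually_dyadic_increments_le:
  assumes fb: "is_fBm M K B" and g: "g < K" and L: "0 < L"
  shows "AE \<omega> in M. \<exists>n0. dyadic_increments_le n0 g (\<lambda>x. B (u + L * x) \<omega>)"
proof -
  define A where "A n = (\<Union>j<(2::nat)^n. {\<omega>\<in>space M.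
      2 powr (- real n * g) < \<bar>B (u + L * ((real j + 1) / 2^n)) \<omega> - B (u + L * (real j / 2^n)) \<omega>\<bar>})"
    for n
  have [measurable]: "B t \<in> borel_measurable M" for t by (rule fBm_measurable[OF fb])
  have [measurable]: "A n \<in> sets M" for n unfolding A_def by measurable
  obtain k :: nat where "1 / (K - g) < real k" using reals_Archimedean2 by blast
  then have "1 < real k * (K - g)" using g by (simp add: field_simps)
  then have \<rho>: "(2::real) powr (1 - 2 * real k * (K - g)) < 1" by (intro powr_less_one) auto
  have "summable (\<lambda>n. fact (2*k) / (2^k * fact k) * (L powr (2*K))^k * (2 powr (1 - 2 * real k * (K - g)))^n)"
    using \<rho> by (intro summable_mult summable_geometric) simp
  then have "summable (\<lambda>n. measure M (A n))"
    by (rule summable_comparison_test'[where N=0])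
       (use fBm_dyadic_level_prob_le[OF fb L] in \<open>simp add: A_def\<close>)
  then have "AE \<omega> in M. eventually (\<lambda>n. \<omega> \<in> space M - A n) sequentially"
    by (intro borel_cantelli_AE1) (simp_all add: less_top[symmetric])
  then show ?thesis
  proof (rule AE_mp, intro AE_I2 impI)
    fix \<omega> assume \<omega>: "\<omega> \<in> space M" and "eventually (\<lambda>n. \<omega> \<in> space M - A n) sequentially"
    then obtain n0 where n0: "\<And>n. n0 \<le> n \<Longrightarrow> \<omega> \<notin> A n" unfolding eventually_sequentially by blast
    have "dyadic_increments_le n0 g (\<lambda>x. B (u + L * x) \<omega>)" unfolding dyadic_increments_le_def
    proof (intro allI impI)
      fix n j :: nat assume "n0 \<le> n" "j < 2^n"
      then show "\<bar>B (u + L * ((real j + 1) / 2^n)) \<omega> - B (u + L * (real j / 2^n)) \<omega>\<bar>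
          \<le> 2 powr (- real n * g)"
        using n0 \<omega> unfolding A_def by (auto simp: not_less)
    qed
    then show "\<exists>n0. dyadic_increments_le n0 g (\<lambda>x. B (u + L * x) \<omega>)" by blast
  qed
qed

lemma fBm_hoelder_on:
  assumes fb: "is_fBm M K B" and g: "0 < g" "g < K" and L: "0 < L"
  shows "AE \<omega> in M. hoelder_on g {u..u+L} (\<lambda>t. B t \<omega>)"
  using fBm_eventually_dyadic_increments_le[OF fb g(2) L, of u]
proof (rule AE_mp, intro AE_I2 impI)
  fix \<omega> assume \<omega>: "\<omega> \<in> space M" and "\<exists>n0. dyadic_increments_le n0 g (\<lambda>x. B (u + L * x) \<omega>)"
  then obtain n0 where G: "dyadic_increments_le n0 g (\<lambda>x. B (u + L * x) \<omega>)" by blast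
  have "\<forall>\<omega>\<in>space M. continuous_on UNIV (\<lambda>t. B t \<omega>)" using fb unfolding is_fBm_def by simp
  then have "continuous_on UNIV (\<lambda>t. B t \<omega>)" using \<omega> by blast
  then have "continuous_on {0..1} (\<lambda>x. B (u + L * x) \<omega>)"
    by (rule continuous_on_compose2) (auto intro!: continuous_intros)
  then show "hoelder_on g {u..u+L} (\<lambda>t. B t \<omega>)"
    by (rule hoelder_on_affine_rescale[OF L dyadic_increments_imp_hoelder_on[OF G g(1)]])
qed

lemma sfBm_hoelder_on:
  assumes sf: "is_sfBm M K \<xi>" and g: "0 < g" "g < K" and T: "0 < T"
  shows "AE \<omega> in M. hoelder_on g {0..T} (\<lambda>t. \<xi> t \<omega>)"
proof -
  obtain B where fb: "is_fBm M K B"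
    and \<xi>: "\<forall>t\<ge>0. \<forall>\<omega>\<in>space M. \<xi> t \<omega> = (B t \<omega> + B (-t) \<omega>) / sqrt 2"
    using sf unfolding is_sfBm_def by blast
  have "AE \<omega> in M. hoelder_on g {-T..-T + 2*T} (\<lambda>t. B t \<omega>)"
    using fBm_hoelder_on[OF fb g, of "2 * T" "-T"] T by simp
  then show ?thesis
  proof (rule AE_mp, intro AE_I2 impI)
    fix \<omega> assume \<omega>: "\<omega> \<in> space M" and "hoelder_on g {-T..-T + 2*T} (\<lambda>t. B t \<omega>)"
    then have hB: "hoelder_on g {-T..T} (\<lambda>t. B t \<omega>)" by simp
    have sub: "{0..T} \<subseteq> {-T..T}" using T by auto
    have "hoelder_on g {-T..T} (\<lambda>t. B (-t) \<omega>)"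
      using hoelder_on_reflect[of g T "-T" "\<lambda>t. B t \<omega>"] hB by simp
    then have "hoelder_on g {0..T} (\<lambda>t. B t \<omega> + B (-t) \<omega>)"
      using hB by (intro hoelder_on_add) (simp_all add: hoelder_on_subset[OF _ sub])
    then have "hoelder_on g {0..T} (\<lambda>t. 1 / sqrt 2 * (B t \<omega> + B (-t) \<omega>))"
      by (rule hoelder_on_cmult)
    moreover have "hoelder_on g {0..T} (\<lambda>t. \<xi> t \<omega>)
        = hoelder_on g {0..T} (\<lambda>t. 1 / sqrt 2 * (B t \<omega> + B (-t) \<omega>))"
      by (rule hoelder_on_cong) (use \<xi> \<omega> in simp)
    ultimately show "hoelder_on g {0..T} (\<lambda>t. \<xi> t \<omega>)" by simp
  qed
qed

lemma sfBm_measurable: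
  assumes sf: "is_sfBm M K \<xi>" and t: "0 \<le> t"
  shows "\<xi> t \<in> borel_measurable M"
proof -
  obtain B where fb: "is_fBm M K B"
    and \<xi>: "\<forall>t\<ge>0. \<forall>\<omega>\<in>space M. \<xi> t \<omega> = (B t \<omega> + B (-t) \<omega>) / sqrt 2"
    using sf unfolding is_sfBm_def by blast
  have [measurable]: "B u \<in> borel_measurable M" for u by (rule fBm_measurable[OF fb])
  have "(\<lambda>\<omega>. (B t \<omega> + B (-t) \<omega>) / sqrt 2) \<in> borel_measurable M" by measurable
  then show ?thesis by (rule measurable_cong[THEN iffD1, rotated]) (use \<xi> t in auto)
qed

lemma hoelder_modification:
  assumes meas: "\<And>t. t \<in> I \<Longrightarrow> X t \<in> borel_measurable M"
    and hoelder: "AE \<omega> in M. hoelder_on g A (\<lambda>t. X t \<omega>)"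
  shows "\<exists>Y. (\<forall>t\<in>I. Y t \<in> borel_measurable M) \<and> (\<forall>t\<in>I. AE \<omega> in M. Y t \<omega> = X t \<omega>) \<and>
    (\<forall>\<omega>\<in>space M. hoelder_on g A (\<lambda>t. Y t \<omega>))"
proof -
  obtain N where N: "\<And>\<omega>. \<omega> \<in> space M - N \<Longrightarrow> hoelder_on g A (\<lambda>t. X t \<omega>)" "N \<in> null_sets M"
    using hoelder by (rule AE_E3) blast
  have [measurable]: "N \<in> sets M" using N(2) by auto
  define Y where "Y t \<omega> = (if \<omega> \<in> N then 0 else X t \<omega>)" for t \<omega>
  have "Y t \<in> borel_measurable M" if "t \<in> I" for t
    unfolding Y_def using meas[OF that] by (intro measurable_If_set) auto
  moreover have "AE \<omega> in M. Y t \<omega> = X t \<omega>" for t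
    using AE_not_in[OF N(2)] by eventually_elim (simp add: Y_def)
  moreover have "hoelder_on g A (\<lambda>t. Y t \<omega>)" if "\<omega> \<in> space M" for \<omega>
  proof (cases "\<omega> \<in> N")
    case True
    then show ?thesis by (simp add: Y_def hoelder_on_const)
  next
    case False
    then show ?thesis using N(1)[of \<omega>] that by (simp add: Y_def)
  qed
  ultimately show ?thesis by blast
qed

lemma sfBm_sum_measurable:
  assumes "\<And>i. i \<in> I \<Longrightarrow> is_sfBm M (H i) (\<xi> i)" and "0 \<le> t"
  shows "(\<lambda>\<omega>. \<Sum>i\<in>I. a i * \<xi> i t \<omega>) \<in> borel_measurable M"
  using sfBm_measurable[OF assms(1) assms(2)]
  by (intro borel_measurable_sum borel_measurable_times borel_measurable_const)

lemma sfBm_sum_hoelder_on: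
  assumes I: "finite I" and sf: "\<And>i. i \<in> I \<Longrightarrow> a i \<noteq> 0 \<Longrightarrow> is_sfBm M (H i) (\<xi> i) \<and> g < H i"
    and g: "0 < g" and T: "0 < T"
  shows "AE \<omega> in M. hoelder_on g {0..T} (\<lambda>t. \<Sum>i\<in>I. a i * \<xi> i t \<omega>)"
proof -
  have "AE \<omega> in M. \<forall>i\<in>I. hoelder_on g {0..T} (\<lambda>t. a i * \<xi> i t \<omega>)"
  proof (rule AE_finite_allI[OF I])
    fix i assume i: "i \<in> I"
    show "AE \<omega> in M. hoelder_on g {0..T} (\<lambda>t. a i * \<xi> i t \<omega>)"
    proof (cases "a i = 0")
      case False
      then have "AE \<omega> in M. hoelder_on g {0..T} (\<lambda>t. \<xi> i t \<omega>)"
        using sfBm_hoelder_on[of "H i" "\<xi> i" g T] sf[OF i] g T by blast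
      then show ?thesis by eventually_elim (rule hoelder_on_cmult)
    qed (simp add: hoelder_on_const)
  qed
  then show ?thesis by eventually_elim (rule hoelder_on_sum[OF I], blast)
qed

end

lemma exists_pos_between_Min:
  fixes S :: "real set"
  assumes "finite S" "S \<noteq> {}" "\<And>h. h \<in> S \<Longrightarrow> 0 < h" "\<gamma> < Min S"
  obtains g where "0 < g" "\<gamma> \<le> g" "\<forall>h\<in>S. g < h"
proof
  have "0 < Min S" using assms(1-3) Min_in by blast
  then show "0 < (max \<gamma> 0 + Min S) / 2" "\<gamma> \<le> (max \<gamma> 0 + Min S) / 2" using assms(4) by auto
  show "\<forall>h\<in>S. (max \<gamma> 0 + Min S) / 2 < h"
    using Min_le[OF assms(1)] \<open>0 < Min S\<close> assms(4) by (fastforce simp: max_def)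
qed

theorem lemma12:
  fixes M :: "'a measure" and N :: nat and H a :: "nat \<Rightarrow> real"
    and \<xi> :: "nat \<Rightarrow> real \<Rightarrow> 'a \<Rightarrow> real" and T \<gamma> :: real
  assumes "prob_space M"
    and "N \<ge> 1"
    and "\<forall>i<N. 0 < H i \<and> H i < 1"
    and "\<exists>i<N. a i \<noteq> 0"
    and "\<forall>i<N. is_sfBm M (H i) (\<xi> i)"
    and "prob_space.indep_vars M (\<lambda>_. PiM {0..} (\<lambda>_. borel))
           (\<lambda>i \<omega>. restrict (\<lambda>t. \<xi> i t \<omega>) {0..}) {..<N}"
    and "T > 0"
    and "\<gamma> < Min {H i | i. i < N \<and> a i \<noteq> 0}"
  shows "\<exists>Y :: real \<Rightarrow> 'a \<Rightarrow> real.
           (\<forall>t\<ge>0. Y t \<in> borel_measurable M) \<and>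
           (\<forall>t\<ge>0. AE \<omega> in M. Y t \<omega> = (\<Sum>i<N. a i * \<xi> i t \<omega>)) \<and>
           (\<forall>\<omega>\<in>space M. hoelder_on \<gamma> {0..T} (\<lambda>t. Y t \<omega>))"
proof -
  interpret prob_space M by fact
  have "finite {H i | i. i < N \<and> a i \<noteq> 0}" "{H i | i. i < N \<and> a i \<noteq> 0} \<noteq> {}"
    "\<And>h. h \<in> {H i | i. i < N \<and> a i \<noteq> 0} \<Longrightarrow> 0 < h"
    using assms(3,4) by auto
  then obtain g where g: "0 < g" "\<gamma> \<le> g" "\<forall>h\<in>{H i | i. i < N \<and> a i \<noteq> 0}. g < h"
    using assms(8) by (rule exists_pos_between_Min)
  have "AE \<omega> in M. hoelder_on g {0..T} (\<lambda>t. \<Sum>i<N. a i * \<xi> i t \<omega>)"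
    using assms(5,7) g by (intro sfBm_sum_hoelder_on) auto
  then have hoelder: "AE \<omega> in M. hoelder_on \<gamma> {0..T} (\<lambda>t. \<Sum>i<N. a i * \<xi> i t \<omega>)"
    by eventually_elim (rule hoelder_on_le_exponent[OF _ g(2)])
  have meas: "(\<lambda>\<omega>. \<Sum>i<N. a i * \<xi> i t \<omega>) \<in> borel_measurable M" if "t \<in> {0..}" for t
    using assms(5) that by (intro sfBm_sum_measurable) auto
  obtain Y where "\<forall>t\<in>{0..}. Y t \<in> borel_measurable M"
    "\<forall>t\<in>{0..}. AE \<omega> in M. Y t \<omega> = (\<Sum>i<N. a i * \<xi> i t \<omega>)"
    "\<forall>\<omega>\<in>space M. hoelder_on \<gamma> {0..T} (\<lambda>t. Y t \<omega>)"
    using hoelder_modification[of "{0..}", OF meas hoelder] by blast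
  then show ?thesis by auto
qed

end
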